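(* Let $X$ be a Hilbert space with unit sphere $S_X$, let $C\subseteq X$ be a subset, and let $N:C\to S_X$ be a mapping. Then the following statements are equivalent. (1) There exists a $C^{1,1}$ convex body $V\subseteq X$ such that $C\subseteq \partial V$ and $N(x)$ is the outer unit normal to $\partial V$ at $x$ for every $x\in C$. (2) There exists some $r>0$ such that $$\langle N(y), y-x\rangle \geq \tfrac{r}{2}\|N(y)-N(x)\|^2 \quad\text{for all } x,y\in C.$$ Moreover, if (2) holds with a constant $r>0$, then the body $V$ in (1) can be chosen so that its outer unit normal $N_{\partial V}:\partial V\to S_X$ is $r^{-1}$-Lipschitz. In addition, if $C$ is bounded, then $V$ can be taken to be bounded as well.
   Context: A convex body in $X$ is a closed convex set with nonempty interior; convex bodies are allowed to be unbounded. A convex body $V$ is of class $C^{1,1}$ if $\partial V$ is a $C^1$ submanifold (so that the outer unit normal $N_{\partial V}:\partial V\to S_X$ is well defined and continuous) and $N_{\partial V}$ is Lipschitz with respect to the ambient norm, i.e. there is $L>0$ with $\|N_{\partial V}(x)-N_{\partial V}(y)\|\le L\|x-y\|$ for all $x,y\in\partial V$. *)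

theory Defs
  imports "HOL-Analysis.Analysis"
begin

text \<open>A real Hilbert space is modelled by a type of class real_inner and complete_space.\<close>

definition convex_body :: "'a::real_normed_vector set \<Rightarrow> bool" where
  "convex_body V \<longleftrightarrow> closed V \<and> convex V \<and> interior V \<noteq> {}"

text \<open>Codimension-one C^1 submanifold: locally the regular zero set of a C^1 function
  (derivative represented by its gradient, continuous in norm, nonvanishing).\<close>
definition C1_hypersurface :: "'a::real_inner set \<Rightarrow> bool" where
  "C1_hypersurface M \<longleftrightarrow>
     (\<forall>x\<in>M. \<exists>U F g. open U \<and> x \<in> U \<and>
        (\<forall>y\<in>U. (F has_derivative (\<lambda>h. g y \<bullet> h)) (at y) \<and> g y \<noteq> 0) \<and>
        continuous_on U g \<and>
        M \<inter> U = {y\<in>U. F y = (0::real)})"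

definition outer_unit_normal :: "'a::real_inner set \<Rightarrow> 'a \<Rightarrow> 'a \<Rightarrow> bool" where
  "outer_unit_normal V x n \<longleftrightarrow> norm n = 1 \<and> (\<forall>y\<in>V. n \<bullet> (y - x) \<le> 0)"

text \<open>The outer unit normal map of the boundary is L-Lipschitz (this also forces uniqueness).\<close>
definition normal_lipschitz :: "'a::real_inner set \<Rightarrow> real \<Rightarrow> bool" where
  "normal_lipschitz V L \<longleftrightarrow>
     (\<forall>x\<in>frontier V. \<forall>y\<in>frontier V. \<forall>nx ny.
        outer_unit_normal V x nx \<and> outer_unit_normal V y ny \<longrightarrow> norm (nx - ny) \<le> L * norm (x - y))"

definition C11_convex_body :: "'a::real_inner set \<Rightarrow> bool" where
  "C11_convex_body V \<longleftrightarrow> convex_body V \<and> C1_hypersurface (frontier V) \<and>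
     (\<forall>x\<in>frontier V. \<exists>n. outer_unit_normal V x n) \<and>
     (\<exists>L>0. normal_lipschitz V L)"

end

theory Submission
  imports Defs
begin

(* (2) implies (1): since |N x - N y|^2 = 2 - 2 <N x, N y>, inequality (2) says that the centre
   y - r N(y) of the ball of radius r tangent at y lies in the half-space <N x, k> <= <N x, x> - r for
   every x in C. Take for K the closed convex hull of these centres and for V the parallel body
   {z. infdist z K <= r}. Off K the distance to K is differentiable, its gradient being the unit
   residual of the metric projection, and the residual z - proj z is nonexpansive. Hence the frontier
   {z. infdist z K = r} is a C^1 hypersurface whose outer normal (z - proj z) / r is (1/r)-Lipschitz,
   and every x in C lies on it with normal N(x).
   (1) implies (2): if the normal of V is L-Lipschitz, the ball of radius rho = 1/(2L) tangent at a
   boundary point x from inside lies in V, since it meets V but not the frontier of V. Its point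
   x - rho N(x) + rho N(y) lies below the support hyperplane at y, which is (2) with r = rho. *)

lemma norm_add_sq:
  fixes a b :: "'a::real_inner"
  shows "(norm (a + b))\<^sup>2 = (norm a)\<^sup>2 + 2 * (a \<bullet> b) + (norm b)\<^sup>2"
  using dot_norm[of a b] by simp

lemma norm_diff_sq:
  fixes a b :: "'a::real_inner"
  shows "(norm (a - b))\<^sup>2 = (norm a)\<^sup>2 - 2 * (a \<bullet> b) + (norm b)\<^sup>2"
  using dot_norm_neg[of a b] by simp

lemma norm_diff_sq_unit:
  fixes u v :: "'a::real_inner"
  assumes "norm u = 1" "norm v = 1"
  shows "(norm (u - v))\<^sup>2 = 2 - 2 * (u \<bullet> v)"
  using assms by (simp add: norm_diff_sq)

lemma inner_sgn_self: "sgn x \<bullet> x = norm x"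
  for x :: "'a::real_inner"
  by (cases "x = 0") (simp_all add: sgn_div_norm power2_norm_eq_inner[symmetric] power2_eq_square)

lemma norm_add_le_quadratic:
  fixes a h :: "'a::real_inner"
  assumes "a \<noteq> 0"
  shows "norm (a + h) \<le> norm a + sgn a \<bullet> h + (norm h)\<^sup>2 / (2 * norm a)"
proof -
  have "2 * norm a * norm (a + h) \<le> (norm (a + h))\<^sup>2 + (norm a)\<^sup>2"
    using sum_squares_bound[of "norm a" "norm (a + h)"] by simp
  also have "\<dots> = 2 * (norm a)\<^sup>2 + 2 * (a \<bullet> h) + (norm h)\<^sup>2"
    by (simp add: norm_add_sq)
  finally show ?thesis
    using assms by (simp add: sgn_div_norm field_simps power2_eq_square)
qed

lemma has_derivative_quadratic_sandwich:
  fixes f :: "'a::real_normed_vector \<Rightarrow> real"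
  assumes "bounded_linear f'"
    and lower: "\<And>w. f z + f' (w - z) \<le> f w"
    and upper: "\<And>w. f w \<le> f z + f' (w - z) + c * (norm (w - z))\<^sup>2"
  shows "(f has_derivative f') (at z)"
proof -
  have bound: "norm (norm (f w - f z - f' (w - z)) / norm (w - z)) \<le> c * norm (w - z)" for w
  proof -
    have "norm (f w - f z - f' (w - z)) \<le> c * (norm (w - z))\<^sup>2"
      using lower[of w] upper[of w] by simp
    then have "norm (f w - f z - f' (w - z)) / norm (w - z) \<le> c * (norm (w - z))\<^sup>2 / norm (w - z)"
      by (rule divide_right_mono) simp
    also have "\<dots> = c * norm (w - z)"
      by (cases "w = z") (simp_all add: power2_eq_square)
    finally show ?thesis
      by simp
  qed
  have "((\<lambda>w. w - z) \<longlongrightarrow> 0) (at z)"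
    using tendsto_ident_at[of z UNIV] by (simp add: LIM_zero_iff)
  then have "((\<lambda>w. c * norm (w - z)) \<longlongrightarrow> 0) (at z)"
    by (intro tendsto_mult_right_zero tendsto_norm_zero)
  then have "((\<lambda>w. norm (f w - f z - f' (w - z)) / norm (w - z)) \<longlongrightarrow> 0) (at z)"
    by (rule Lim_null_comparison[OF always_eventually[OF allI[OF bound]]])
  then show ?thesis
    using assms(1) by (simp add: has_derivative_iff_norm)
qed

lemma norm_diff_midpoint_sq:
  fixes a b z :: "'a::real_inner"
  shows "(norm (a - b))\<^sup>2
           = 2 * (norm (z - a))\<^sup>2 + 2 * (norm (z - b))\<^sup>2 - 4 * (norm (z - midpoint a b))\<^sup>2"
  unfolding midpoint_def power2_norm_eq_inner
  by (simp add: inner_commute algebra_simps)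

lemma Cauchy_if_sq_dist_le:
  fixes s :: "nat \<Rightarrow> 'a::metric_space"
  assumes "\<And>m n. (dist (s m) (s n))\<^sup>2 \<le> f m + f n" and "f \<longlonglongrightarrow> 0"
  shows "Cauchy s"
proof (rule metric_CauchyI)
  fix e :: real
  assume "0 < e"
  then obtain M where M: "\<forall>n\<ge>M. norm (f n - 0) < e\<^sup>2 / 2"
    using LIMSEQ_D[OF assms(2), of "e\<^sup>2 / 2"] by auto
  have "dist (s m) (s n) < e" if "M \<le> m" "M \<le> n" for m n
  proof -
    have "(dist (s m) (s n))\<^sup>2 < e\<^sup>2"
      using assms(1)[of m n] M[rule_format, OF that(1)] M[rule_format, OF that(2)] by simp
    then show ?thesis
      using \<open>0 < e\<close> by (simp add: power_less_imp_less_base)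
  qed
  then show "\<exists>M. \<forall>m\<ge>M. \<forall>n\<ge>M. dist (s m) (s n) < e"
    by blast
qed

lemma exists_nearest_point_closed_convex:
  fixes K :: "'a::{real_inner,complete_space} set"
  assumes "closed K" and "convex K" and "K \<noteq> {}"
  shows "\<exists>p\<in>K. dist z p = infdist z K"
proof -
  define \<delta> where "\<delta> = infdist z K"
  have "\<exists>k\<in>K. (dist z k)\<^sup>2 < \<delta>\<^sup>2 + 1 / Suc n" for n
  proof -
    have "(INF k\<in>K. dist z k) < sqrt (\<delta>\<^sup>2 + 1 / Suc n)"
      using infdist_nonneg[of z K] assms(3)
      by (simp add: \<delta>_def infdist_notempty[symmetric] real_less_rsqrt)
    then obtain k where "k \<in> K" "dist z k < sqrt (\<delta>\<^sup>2 + 1 / Suc n)"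
      using cINF_less_iff[OF assms(3) bdd_below_image_dist] by blast
    moreover from this(2) have "(dist z k)\<^sup>2 < \<delta>\<^sup>2 + 1 / Suc n"
      by (metis abs_of_nonneg real_sqrt_abs real_sqrt_less_iff zero_le_dist)
    ultimately show ?thesis
      by blast
  qed
  then obtain s where s_in: "\<And>n. s n \<in> K"
    and s_near: "\<And>n. (dist z (s n))\<^sup>2 < \<delta>\<^sup>2 + 1 / Suc n"
    by metis
  \<comment> \<open>The parallelogram law makes any minimizing sequence Cauchy.\<close>
  have "(dist (s m) (s n))\<^sup>2 \<le> 2 / Suc m + 2 / Suc n" for m n
  proof -
    have "midpoint (s m) (s n) \<in> K"
      using convexD[OF assms(2) s_in[of m] s_in[of n], of "1/2" "1/2"]
      by (simp add: midpoint_def scaleR_add_right)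
    then have "\<delta>\<^sup>2 \<le> (dist z (midpoint (s m) (s n)))\<^sup>2"
      by (simp add: \<delta>_def infdist_le infdist_nonneg power_mono)
    then show ?thesis
      using norm_diff_midpoint_sq[of "s m" "s n" z] s_near[of m] s_near[of n]
      by (simp add: dist_norm)
  qed
  moreover have "(\<lambda>n. 2 / Suc n) \<longlonglongrightarrow> 0"
    using tendsto_mult_right_zero[OF LIMSEQ_inverse_real_of_nat, of 2] by (simp add: divide_inverse)
  ultimately have "Cauchy s"
    by (rule Cauchy_if_sq_dist_le)
  then obtain p where p: "s \<longlonglongrightarrow> p"
    using Cauchy_convergent_iff convergent_def by blast
  have "p \<in> K"
    using closed_sequentially[OF assms(1)] s_in p by blast
  moreover have "(dist z p)\<^sup>2 \<le> \<delta>\<^sup>2"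
  proof (rule LIMSEQ_le)
    show "(\<lambda>n. (dist z (s n))\<^sup>2) \<longlonglongrightarrow> (dist z p)\<^sup>2"
      by (intro tendsto_intros p)
    show "(\<lambda>n. \<delta>\<^sup>2 + 1 / Suc n) \<longlonglongrightarrow> \<delta>\<^sup>2"
      using tendsto_add[OF tendsto_const LIMSEQ_inverse_real_of_nat] by (simp add: divide_inverse)
    show "\<exists>N. \<forall>n\<ge>N. (dist z (s n))\<^sup>2 \<le> \<delta>\<^sup>2 + 1 / Suc n"
      using s_near less_imp_le by blast
  qed
  then have "dist z p \<le> \<delta>"
    using power2_le_imp_le \<delta>_def infdist_nonneg by blast
  ultimately show ?thesis
    using infdist_le[of p K z] unfolding \<delta>_def by force
qed

locale closed_convex_set =
  fixes K :: "'a::{real_inner,complete_space} set"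
  assumes closed: "closed K" and convex: "convex K" and nonempty: "K \<noteq> {}"
begin

definition proj :: "'a \<Rightarrow> 'a" where
  "proj z = (SOME p. p \<in> K \<and> dist z p = infdist z K)"

lemma proj_in: "proj z \<in> K" and norm_proj: "norm (z - proj z) = infdist z K"
proof -
  have "proj z \<in> K \<and> dist z (proj z) = infdist z K"
    unfolding proj_def using exists_nearest_point_closed_convex[OF closed convex nonempty]
    by (rule someI2_bex) auto
  then show "proj z \<in> K" "norm (z - proj z) = infdist z K"
    by (simp_all add: dist_norm)
qed

lemma norm_proj_le: "k \<in> K \<Longrightarrow> norm (z - proj z) \<le> norm (z - k)"
  using infdist_le[of k K z] by (simp add: norm_proj dist_norm)

lemma inner_proj_le:
  assumes "k \<in> K"
  shows "(z - proj z) \<bullet> (k - proj z) \<le> 0"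
proof -
  define a b where "a = z - proj z" and "b = k - proj z"
  \<comment> \<open>Moving from the projection towards k cannot decrease the distance to z.\<close>
  have "2 * (a \<bullet> b) \<le> t * (norm b)\<^sup>2" if "0 < t" "t \<le> 1" for t
  proof -
    have "proj z + t *\<^sub>R b \<in> K"
      using convexD[OF convex proj_in assms, of "1 - t" t] that
      by (simp add: b_def algebra_simps)
    then have "(norm a)\<^sup>2 \<le> (norm (a - t *\<^sub>R b))\<^sup>2"
      using norm_proj_le[of "proj z + t *\<^sub>R b" z] by (simp add: a_def power_mono diff_diff_eq)
    moreover have "(norm (a - t *\<^sub>R b))\<^sup>2 = (norm a)\<^sup>2 - t * (2 * (a \<bullet> b)) + t * (t * (norm b)\<^sup>2)"
      unfolding norm_diff_sq by (simp add: power_mult_distrib power2_eq_square)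
    ultimately have "t * (2 * (a \<bullet> b)) \<le> t * (t * (norm b)\<^sup>2)"
      by linarith
    then show ?thesis
      using that by simp
  qed
  then have "\<forall>\<^sub>F t in at_right 0. 2 * (a \<bullet> b) \<le> t * (norm b)\<^sup>2"
    by (auto simp: eventually_at_right_field intro!: exI[of _ 1])
  moreover have "((\<lambda>t. t * (norm b)\<^sup>2) \<longlongrightarrow> 0) (at_right 0)"
    by (intro tendsto_eq_intros) auto
  ultimately have "2 * (a \<bullet> b) \<le> 0"
    by (intro tendsto_lowerbound) auto
  then show ?thesis
    by (simp add: a_def b_def)
qed

lemma norm_diff_residual_le: "norm ((x - proj x) - (y - proj y)) \<le> norm (x - y)"
proof -
  define a b where "a = (x - proj x) - (y - proj y)" and "b = proj x - proj y"
  have "a \<bullet> b = - ((x - proj x) \<bullet> (proj y - proj x)) - (y - proj y) \<bullet> (proj x - proj y)"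
    unfolding a_def b_def by (simp add: inner_diff_left inner_diff_right)
  then have "0 \<le> a \<bullet> b"
    using inner_proj_le[OF proj_in[of y], of x] inner_proj_le[OF proj_in[of x], of y] by simp
  moreover have "x - y = a + b"
    by (simp add: a_def b_def)
  ultimately have "(norm a)\<^sup>2 \<le> (norm (x - y))\<^sup>2"
    by (simp add: norm_add_sq)
  then show ?thesis
    unfolding a_def by (rule power2_le_imp_le) simp
qed

lemma continuous_on_residual: "continuous_on A (\<lambda>z. z - proj z)"
  by (rule lipschitz_on_continuous_on[of 1], rule lipschitz_onI)
    (auto simp: dist_norm norm_diff_residual_le)

lemma infdist_ge_linear: "infdist z K + sgn (z - proj z) \<bullet> (w - z) \<le> infdist w K"
proof -
  define n where "n = sgn (z - proj z)"
  have "0 \<le> n \<bullet> (proj z - proj w)"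
    using inner_proj_le[OF proj_in[of w], of z]
    unfolding n_def sgn_div_norm inner_scaleR_left
    by (intro mult_nonneg_nonneg) (simp_all add: inner_diff_right)
  have "norm n \<le> 1"
    by (simp add: n_def norm_sgn)
  have "infdist z K + n \<bullet> (w - z) = n \<bullet> (z - proj z) + n \<bullet> (w - z)"
    by (simp add: n_def inner_sgn_self norm_proj)
  also have "\<dots> \<le> n \<bullet> (z - proj z) + n \<bullet> (w - z) + n \<bullet> (proj z - proj w)"
    using \<open>0 \<le> n \<bullet> (proj z - proj w)\<close> by simp
  also have "\<dots> = n \<bullet> (w - proj w)"
    by (simp add: inner_diff_right)
  also have "\<dots> \<le> norm n * norm (w - proj w)"
    by (rule norm_cauchy_schwarz)
  also have "\<dots> \<le> infdist w K"
    using \<open>norm n \<le> 1\<close> infdist_nonneg[of w K] by (simp add: norm_proj mult_left_le_one_le)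
  finally show ?thesis
    by (simp add: n_def)
qed

lemma infdist_le_quadratic:
  assumes "0 < infdist z K"
  shows "infdist w K \<le> infdist z K + sgn (z - proj z) \<bullet> (w - z) + (norm (w - z))\<^sup>2 / (2 * infdist z K)"
proof -
  have "z - proj z \<noteq> 0"
    using assms norm_proj[of z] by auto
  have "infdist w K \<le> norm ((z - proj z) + (w - z))"
    using infdist_le[OF proj_in, of w z] by (simp add: dist_norm)
  also have "\<dots> \<le> infdist z K + sgn (z - proj z) \<bullet> (w - z) + (norm (w - z))\<^sup>2 / (2 * infdist z K)"
    using norm_add_le_quadratic[OF \<open>z - proj z \<noteq> 0\<close>, of "w - z"] by (simp add: norm_proj)
  finally show ?thesis .
qed

lemma has_derivative_infdist:
  assumes "0 < infdist z K"
  shows "((\<lambda>w. infdist w K) has_derivative (\<lambda>h. sgn (z - proj z) \<bullet> h)) (at z)"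
proof (rule has_derivative_quadratic_sandwich)
  show "bounded_linear (\<lambda>h. sgn (z - proj z) \<bullet> h)"
    by (rule bounded_linear_inner_right)
  show "infdist w K
          \<le> infdist z K + sgn (z - proj z) \<bullet> (w - z) + 1 / (2 * infdist z K) * (norm (w - z))\<^sup>2" for w
    using infdist_le_quadratic[OF assms, of w] by simp
qed (rule infdist_ge_linear)

end

definition parallel_body :: "'a::metric_space set \<Rightarrow> real \<Rightarrow> 'a set" where
  "parallel_body K r = {z. infdist z K \<le> r}"

lemma closed_parallel_body: "closed (parallel_body K r)"
  unfolding parallel_body_def by (intro closed_Collect_le continuous_intros)

lemma infdist_less_imp_interior_parallel_body:
  "infdist z K < r \<Longrightarrow> z \<in> interior (parallel_body K r)"
  using open_Collect_less[OF continuous_on_infdist[OF continuous_on_id] continuous_on_const]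
  by (rule interior_maximal[THEN subsetD, rotated]) (auto simp: parallel_body_def)

context closed_convex_set
begin

lemma convex_parallel_body: "convex (parallel_body K r)"
proof (rule convexI)
  fix x y and u v :: real
  assume x: "x \<in> parallel_body K r" and y: "y \<in> parallel_body K r"
    and uv: "0 \<le> u" "0 \<le> v" "u + v = 1"
  have "u *\<^sub>R proj x + v *\<^sub>R proj y \<in> K"
    using convexD[OF convex proj_in proj_in uv] .
  then have "infdist (u *\<^sub>R x + v *\<^sub>R y) K \<le> dist (u *\<^sub>R x + v *\<^sub>R y) (u *\<^sub>R proj x + v *\<^sub>R proj y)"
    by (rule infdist_le)
  also have "\<dots> = norm (u *\<^sub>R (x - proj x) + v *\<^sub>R (y - proj y))"
    by (simp add: dist_norm algebra_simps)
  also have "\<dots> \<le> u * infdist x K + v * infdist y K"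
    using norm_triangle_ineq[of "u *\<^sub>R (x - proj x)" "v *\<^sub>R (y - proj y)"] uv
    by (simp add: norm_proj)
  also have "\<dots> \<le> u * r + v * r"
    using x y uv by (intro add_mono mult_left_mono) (auto simp: parallel_body_def)
  finally show "u *\<^sub>R x + v *\<^sub>R y \<in> parallel_body K r"
    using uv by (simp add: parallel_body_def distrib_right[symmetric])
qed

lemma bounded_parallel_body:
  assumes "bounded K"
  shows "bounded (parallel_body K r)"
proof -
  obtain B where B: "\<And>k. k \<in> K \<Longrightarrow> norm k \<le> B"
    using assms by (auto simp: bounded_iff)
  have "norm z \<le> B + r" if "z \<in> parallel_body K r" for z
    using norm_triangle_ineq[of "proj z" "z - proj z"] B[OF proj_in[of z]] that
    by (simp add: norm_proj parallel_body_def)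
  then show ?thesis
    by (auto simp: bounded_iff)
qed

context
  fixes r :: real
  assumes r_pos: "0 < r"
begin

lemma sgn_residual_eq:
  assumes "infdist z K = r"
  shows "sgn (z - proj z) = (1 / r) *\<^sub>R (z - proj z)"
  using assms by (simp add: sgn_div_norm norm_proj divide_inverse)

lemma norm_sgn_residual:
  assumes "infdist z K = r"
  shows "norm (sgn (z - proj z)) = 1"
  using assms r_pos norm_proj[of z] by (auto simp: norm_sgn)

lemma frontier_parallel_body: "frontier (parallel_body K r) = {z. infdist z K = r}"
proof -
  have "z \<notin> interior (parallel_body K r)" if z: "infdist z K = r" for z
  proof
    assume "z \<in> interior (parallel_body K r)"
    then obtain e where "e > 0" and ball: "ball z e \<subseteq> parallel_body K r"
      by (auto simp: mem_interior)
    define n where "n = sgn (z - proj z)"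
    have "norm n = 1"
      using norm_sgn_residual[OF z] by (simp add: n_def)
    then have "z + (e / 2) *\<^sub>R n \<in> parallel_body K r"
      using ball \<open>e > 0\<close> by (auto simp: dist_norm)
    moreover have "r + e / 2 \<le> infdist (z + (e / 2) *\<^sub>R n) K"
      using infdist_ge_linear[of z "z + (e / 2) *\<^sub>R n"] \<open>norm n = 1\<close> z
      by (simp add: n_def power2_norm_eq_inner[symmetric])
    ultimately show False
      using \<open>e > 0\<close> by (simp add: parallel_body_def)
  qed
  moreover have "frontier (parallel_body K r) = parallel_body K r - interior (parallel_body K r)"
    by (simp add: frontier_def closure_closed[OF closed_parallel_body])
  ultimately show ?thesis
    using infdist_less_imp_interior_parallel_body[of _ K r]
    by (auto simp: parallel_body_def order.order_iff_strict)
qed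

lemma outer_unit_normal_parallel_body_iff:
  assumes z: "infdist z K = r"
  shows "outer_unit_normal (parallel_body K r) z n \<longleftrightarrow> n = sgn (z - proj z)"
proof
  define s where "s = sgn (z - proj z)"
  assume "outer_unit_normal (parallel_body K r) z n"
  then have "norm n = 1" and supp: "\<And>y. y \<in> parallel_body K r \<Longrightarrow> n \<bullet> (y - z) \<le> 0"
    by (auto simp: outer_unit_normal_def)
  \<comment> \<open>Test the support half-space at the point of the parallel body farthest out in direction n.\<close>
  have "proj z + r *\<^sub>R n \<in> parallel_body K r"
    using infdist_le[OF proj_in, of "proj z + r *\<^sub>R n" z] \<open>norm n = 1\<close> r_pos
    by (simp add: parallel_body_def dist_norm)
  then have "n \<bullet> (proj z + r *\<^sub>R n - z) \<le> 0"
    by (rule supp)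
  moreover have "r *\<^sub>R s = z - proj z"
    using sgn_residual_eq[OF z] r_pos by (simp add: s_def)
  then have "proj z + r *\<^sub>R n - z = r *\<^sub>R (n - s)"
    by (simp add: scaleR_diff_right algebra_simps)
  ultimately have "r * (n \<bullet> (n - s)) \<le> 0"
    by simp
  then have "n \<bullet> (n - s) \<le> 0"
    using r_pos by (simp add: mult_le_0_iff)
  then have "1 \<le> n \<bullet> s"
    using \<open>norm n = 1\<close> by (simp add: inner_diff_right power2_norm_eq_inner[symmetric])
  then have "(norm (n - s))\<^sup>2 \<le> 0"
    using norm_diff_sq_unit[OF \<open>norm n = 1\<close> norm_sgn_residual[OF z]] by (simp add: s_def)
  then show "n = s"
    by simp
next
  assume n: "n = sgn (z - proj z)"
  have "n \<bullet> (y - z) \<le> 0" if "y \<in> parallel_body K r" for y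
    using infdist_ge_linear[of z y] that z by (simp add: n parallel_body_def)
  then show "outer_unit_normal (parallel_body K r) z n"
    using norm_sgn_residual[OF z] by (simp add: outer_unit_normal_def n)
qed

lemma normal_lipschitz_parallel_body: "normal_lipschitz (parallel_body K r) (1 / r)"
  unfolding normal_lipschitz_def frontier_parallel_body
proof (intro ballI allI impI, elim conjE)
  fix x y nx ny
  assume "x \<in> {z. infdist z K = r}" "y \<in> {z. infdist z K = r}"
    and "outer_unit_normal (parallel_body K r) x nx" "outer_unit_normal (parallel_body K r) y ny"
  then have "nx - ny = (1 / r) *\<^sub>R ((x - proj x) - (y - proj y))"
    by (simp add: outer_unit_normal_parallel_body_iff sgn_residual_eq scaleR_diff_right)
  then show "norm (nx - ny) \<le> 1 / r * norm (x - y)"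
    using norm_diff_residual_le[of x y] r_pos by (simp add: divide_right_mono)
qed

lemma C1_hypersurface_frontier_parallel_body: "C1_hypersurface (frontier (parallel_body K r))"
  unfolding C1_hypersurface_def
proof
  fix x
  assume x: "x \<in> frontier (parallel_body K r)"
  define U where "U = {z. 0 < infdist z K}"
  have residual_nonzero: "y - proj y \<noteq> 0" if "y \<in> U" for y
    using that norm_proj[of y] by (auto simp: U_def)
  have "open U"
    unfolding U_def by (intro open_Collect_less continuous_intros)
  moreover have "x \<in> U"
    using x r_pos by (simp add: frontier_parallel_body U_def)
  moreover have "\<forall>y\<in>U. ((\<lambda>z. infdist z K - r) has_derivative (\<lambda>h. sgn (y - proj y) \<bullet> h)) (at y)
      \<and> sgn (y - proj y) \<noteq> 0"
  proof
    fix y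
    assume "y \<in> U"
    then show "((\<lambda>z. infdist z K - r) has_derivative (\<lambda>h. sgn (y - proj y) \<bullet> h)) (at y)
        \<and> sgn (y - proj y) \<noteq> 0"
      using has_derivative_diff[OF has_derivative_infdist has_derivative_const[of r]]
        residual_nonzero[of y]
      by (simp add: U_def sgn_zero_iff)
  qed
  moreover have "continuous_on U (\<lambda>y. sgn (y - proj y))"
    using residual_nonzero by (intro continuous_on_sgn continuous_on_residual) blast
  moreover have "frontier (parallel_body K r) \<inter> U = {y \<in> U. infdist y K - r = 0}"
    using r_pos by (auto simp: frontier_parallel_body U_def)
  ultimately show "\<exists>U F g. open U \<and> x \<in> U \<and>
      (\<forall>y\<in>U. (F has_derivative (\<lambda>h. g y \<bullet> h)) (at y) \<and> g y \<noteq> 0) \<and>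
      continuous_on U g \<and> frontier (parallel_body K r) \<inter> U = {y \<in> U. F y = 0}"
    by (intro exI[of _ U] exI[of _ "\<lambda>z. infdist z K - r"] exI[of _ "\<lambda>y. sgn (y - proj y)"]) blast
qed

lemma C11_convex_body_parallel_body: "C11_convex_body (parallel_body K r)"
  unfolding C11_convex_body_def convex_body_def
proof (intro conjI)
  obtain k where "k \<in> K"
    using nonempty by blast
  then show "interior (parallel_body K r) \<noteq> {}"
    using infdist_less_imp_interior_parallel_body[of k K r] r_pos by auto
  show "\<forall>x\<in>frontier (parallel_body K r). \<exists>n. outer_unit_normal (parallel_body K r) x n"
    using outer_unit_normal_parallel_body_iff by (auto simp: frontier_parallel_body)
  show "\<exists>L>0. normal_lipschitz (parallel_body K r) L"
    using normal_lipschitz_parallel_body r_pos by (intro exI[of _ "1 / r"]) simp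
qed (simp_all add: closed_parallel_body convex_parallel_body C1_hypersurface_frontier_parallel_body)

lemma parallel_body_touching_point:
  assumes "norm n = 1" and "x - r *\<^sub>R n \<in> K" and halfspace: "\<forall>k\<in>K. n \<bullet> k \<le> n \<bullet> x - r"
  shows "x \<in> frontier (parallel_body K r)" and "outer_unit_normal (parallel_body K r) x n"
proof -
  have below: "n \<bullet> (y - x) \<le> infdist y K - r" for y
  proof -
    have "n \<bullet> (y - proj y) \<le> infdist y K"
      using norm_cauchy_schwarz[of n "y - proj y"] \<open>norm n = 1\<close> by (simp add: norm_proj)
    then show ?thesis
      using halfspace proj_in[of y] by (auto simp: inner_diff_right)
  qed
  have "infdist x K \<le> r"
    using infdist_le[OF assms(2), of x] \<open>norm n = 1\<close> r_pos by (simp add: dist_norm)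
  then have "infdist x K = r"
    using below[of x] by simp
  then show "x \<in> frontier (parallel_body K r)"
    by (simp add: frontier_parallel_body)
  have "n \<bullet> (y - x) \<le> 0" if "y \<in> parallel_body K r" for y
    using below[of y] that by (simp add: parallel_body_def)
  then show "outer_unit_normal (parallel_body K r) x n"
    using \<open>norm n = 1\<close> by (simp add: outer_unit_normal_def)
qed

end

end

lemma center_in_shifted_halfspace:
  fixes u v x y :: "'a::real_inner"
  assumes "norm u = 1" "norm v = 1" and "u \<bullet> (x - y) \<ge> r / 2 * (norm (u - v))\<^sup>2"
  shows "u \<bullet> (y - r *\<^sub>R v) \<le> u \<bullet> x - r"
  using assms by (simp add: norm_diff_sq_unit inner_diff_right algebra_simps)

lemma closed_convex_between:
  fixes S H :: "'a::real_normed_vector set"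
  assumes "S \<subseteq> H" "closed H" "convex H" "H \<noteq> {}"
  obtains K where "closed K" "convex K" "K \<noteq> {}" "S \<subseteq> K" "K \<subseteq> H" "bounded S \<Longrightarrow> bounded K"
proof (cases "S = {}")
  case True
  obtain h where "h \<in> H"
    using assms(4) by blast
  then show ?thesis
    using that[of "{h}"] True by auto
next
  case False
  show ?thesis
  proof (rule that[of "closure (convex hull S)"])
    show "closure (convex hull S) \<subseteq> H"
      using assms(1-3) by (intro closure_minimal hull_minimal)
    show "S \<subseteq> closure (convex hull S)"
      by (rule subset_trans[OF hull_subset closure_subset])
  qed (use False in \<open>auto simp: convex_closure bounded_convex_hull intro: bounded_closure\<close>)
qed

lemma exists_C11_convex_body_with_normals:
  fixes C :: "'a::{real_inner,complete_space} set" and N :: "'a \<Rightarrow> 'a"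
  assumes unit: "\<forall>x\<in>C. norm (N x) = 1" and "0 < r"
    and cond: "\<forall>x\<in>C. \<forall>y\<in>C. N y \<bullet> (y - x) \<ge> r / 2 * (norm (N y - N x))\<^sup>2"
  shows "\<exists>V. C11_convex_body V \<and> C \<subseteq> frontier V \<and> (\<forall>x\<in>C. outer_unit_normal V x (N x))
           \<and> normal_lipschitz V (1 / r) \<and> (bounded C \<longrightarrow> bounded V)"
proof -
  define c where "c x = x - r *\<^sub>R N x" for x
  define H where "H = (\<Inter>x\<in>C. {k. N x \<bullet> k \<le> N x \<bullet> x - r})"
  have "closed H" and "convex H"
    unfolding H_def by (auto intro!: closed_INT convex_INT closed_halfspace_le convex_halfspace_le)
  have centers: "c ` C \<subseteq> H"
    using cond unit by (auto simp: c_def H_def intro!: center_in_shifted_halfspace)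
  then have "H \<noteq> {}"
    by (cases "C = {}") (auto simp: H_def)
  have "bounded (c ` C)" if "bounded C"
  proof -
    obtain B where "\<forall>x\<in>C. norm x \<le> B"
      using \<open>bounded C\<close> by (auto simp: bounded_iff)
    then have "norm (c x) \<le> B + r" if "x \<in> C" for x
      using norm_triangle_ineq4[of x "r *\<^sub>R N x"] unit that \<open>0 < r\<close> by (fastforce simp: c_def)
    then show ?thesis
      by (auto simp: bounded_iff)
  qed
  then obtain K where K: "closed K" "convex K" "K \<noteq> {}" and "c ` C \<subseteq> K" "K \<subseteq> H"
    and bounded: "bounded C \<Longrightarrow> bounded K"
    using closed_convex_between[OF centers \<open>closed H\<close> \<open>convex H\<close> \<open>H \<noteq> {}\<close>] by metis
  interpret closed_convex_set K
    using K by unfold_locales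
  have "x \<in> frontier (parallel_body K r) \<and> outer_unit_normal (parallel_body K r) x (N x)" if "x \<in> C" for x
    using parallel_body_touching_point[OF \<open>0 < r\<close>, of "N x" x] that unit \<open>c ` C \<subseteq> K\<close> \<open>K \<subseteq> H\<close>
    by (auto simp: c_def H_def)
  then show ?thesis
    using C11_convex_body_parallel_body normal_lipschitz_parallel_body bounded_parallel_body bounded
      \<open>0 < r\<close>
    by (intro exI[of _ "parallel_body K r"]) blast
qed

lemma frontier_outside_inner_ball:
  fixes V :: "'a::real_inner set"
  assumes "normal_lipschitz V L" "0 < L"
    and "x \<in> frontier V" "x \<in> V" "outer_unit_normal V x u"
    and "z \<in> frontier V" "outer_unit_normal V z n"
  shows "1 / (2 * L) \<le> dist z (x - (1 / (2 * L)) *\<^sub>R u)"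
proof -
  define \<rho> where "\<rho> = 1 / (2 * L)"
  have "norm u = 1"
    using assms(5) by (simp add: outer_unit_normal_def)
  have "(u - n) \<bullet> (x - z) \<le> L * (norm (x - z))\<^sup>2"
  proof -
    have "(u - n) \<bullet> (x - z) \<le> norm (u - n) * norm (x - z)"
      by (rule norm_cauchy_schwarz)
    also have "\<dots> \<le> L * norm (x - z) * norm (x - z)"
      using assms unfolding normal_lipschitz_def by (intro mult_right_mono) auto
    finally show ?thesis
      by (simp add: power2_eq_square)
  qed
  moreover have "n \<bullet> (x - z) \<le> 0"
    using assms(4,7) by (simp add: outer_unit_normal_def)
  ultimately have "2 * \<rho> * (u \<bullet> (x - z)) \<le> (norm (x - z))\<^sup>2"
    using \<open>0 < L\<close> by (simp add: \<rho>_def inner_diff_left field_simps)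
  moreover have "(norm (\<rho> *\<^sub>R u - (x - z)))\<^sup>2 = \<rho>\<^sup>2 - 2 * \<rho> * (u \<bullet> (x - z)) + (norm (x - z))\<^sup>2"
    unfolding norm_diff_sq using \<open>norm u = 1\<close> by (simp add: power_mult_distrib)
  ultimately have "\<rho>\<^sup>2 \<le> (norm (\<rho> *\<^sub>R u - (x - z)))\<^sup>2"
    by simp
  moreover have "\<rho> *\<^sub>R u - (x - z) = z - (x - \<rho> *\<^sub>R u)"
    by simp
  ultimately show ?thesis
    unfolding \<rho>_def[symmetric] dist_norm by (metis norm_ge_zero power2_le_imp_le)
qed

lemma outer_unit_normal_interior_less:
  assumes "outer_unit_normal V x u" and "q \<in> interior V"
  shows "u \<bullet> (q - x) < 0"
proof -
  obtain e where "e > 0" and "ball q e \<subseteq> V"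
    using assms(2) by (auto simp: mem_interior)
  have "norm u = 1" and supp: "\<forall>y\<in>V. u \<bullet> (y - x) \<le> 0"
    using assms(1) by (auto simp: outer_unit_normal_def)
  then have "q + (e / 2) *\<^sub>R u \<in> V"
    using \<open>e > 0\<close> \<open>ball q e \<subseteq> V\<close> by (auto simp: dist_norm)
  then have "u \<bullet> (q - x) + e / 2 \<le> 0"
    using supp \<open>norm u = 1\<close> by (fastforce simp: inner_add_right power2_norm_eq_inner[symmetric] algebra_simps)
  then show ?thesis
    using \<open>e > 0\<close> by simp
qed

lemma segment_enters_tangent_ball:
  fixes u w x :: "'a::real_inner"
  assumes "norm u = 1" and "u \<bullet> w < 0" and "0 < \<rho>"
  obtains t where "0 < t" "t \<le> 1" "x + t *\<^sub>R w \<in> ball (x - \<rho> *\<^sub>R u) \<rho>"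
proof -
  have "w \<noteq> 0"
    using assms(2) by auto
  define t where "t = min 1 (- \<rho> * (u \<bullet> w) / (norm w)\<^sup>2)"
  have "0 < t" "t \<le> 1" and t_le: "t * (norm w)\<^sup>2 \<le> - \<rho> * (u \<bullet> w)"
    using assms \<open>w \<noteq> 0\<close> by (auto simp: t_def min_def field_simps mult_pos_neg)
  have "(norm (\<rho> *\<^sub>R u + t *\<^sub>R w))\<^sup>2 = \<rho>\<^sup>2 + 2 * \<rho> * t * (u \<bullet> w) + t * (t * (norm w)\<^sup>2)"
    unfolding norm_add_sq using assms(1) by (simp add: power_mult_distrib power2_eq_square)
  also have "\<dots> \<le> \<rho>\<^sup>2 + 2 * \<rho> * t * (u \<bullet> w) + t * (- \<rho> * (u \<bullet> w))"
    using t_le \<open>0 < t\<close> by (intro add_left_mono mult_left_mono) auto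
  also have "\<dots> < \<rho>\<^sup>2"
    using assms \<open>0 < t\<close> by (simp add: algebra_simps mult_pos_neg)
  finally have "norm (\<rho> *\<^sub>R u + t *\<^sub>R w) < \<rho>"
    using assms(3) by (simp add: power_less_imp_less_base)
  then show ?thesis
    using that[OF \<open>0 < t\<close> \<open>t \<le> 1\<close>] by (simp add: dist_norm norm_minus_commute algebra_simps)
qed

lemma tangent_ball_inter_convex_nonempty:
  fixes V :: "'a::real_inner set"
  assumes "convex V" "interior V \<noteq> {}" "x \<in> V" "outer_unit_normal V x u" "0 < \<rho>"
  shows "ball (x - \<rho> *\<^sub>R u) \<rho> \<inter> V \<noteq> {}"
proof -
  obtain q where "q \<in> interior V"
    using assms(2) by blast
  then have "u \<bullet> (q - x) < 0"
    using outer_unit_normal_interior_less[OF assms(4)] by blast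
  moreover have "norm u = 1"
    using assms(4) by (simp add: outer_unit_normal_def)
  ultimately obtain t where "0 < t" "t \<le> 1" and t: "x + t *\<^sub>R (q - x) \<in> ball (x - \<rho> *\<^sub>R u) \<rho>"
    using segment_enters_tangent_ball[OF _ _ \<open>0 < \<rho>\<close>] by blast
  have "x + t *\<^sub>R (q - x) \<in> V"
    using convexD[OF assms(1,3) interior_subset[THEN subsetD, OF \<open>q \<in> interior V\<close>], of "1 - t" t]
      \<open>0 < t\<close> \<open>t \<le> 1\<close>
    by (simp add: algebra_simps)
  with t show ?thesis
    by blast
qed

lemma cball_subset_C11_convex_body:
  fixes V :: "'a::real_inner set"
  assumes V: "C11_convex_body V" and lip: "normal_lipschitz V L" "0 < L"
    and x: "x \<in> frontier V" "outer_unit_normal V x u"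
  shows "cball (x - (1 / (2 * L)) *\<^sub>R u) (1 / (2 * L)) \<subseteq> V"
proof -
  define \<rho> where "\<rho> = 1 / (2 * L)"
  define c where "c = x - \<rho> *\<^sub>R u"
  have "\<rho> > 0"
    using \<open>0 < L\<close> by (simp add: \<rho>_def)
  have "closed V" "convex V" "interior V \<noteq> {}"
    and normals: "\<forall>z\<in>frontier V. \<exists>n. outer_unit_normal V z n"
    using V by (auto simp: C11_convex_body_def convex_body_def)
  have "x \<in> V"
    using x(1) \<open>closed V\<close> frontier_subset_closed by blast
  have "ball c \<rho> \<inter> V \<noteq> {}"
    unfolding c_def using \<open>convex V\<close> \<open>interior V \<noteq> {}\<close> \<open>x \<in> V\<close> x(2) \<open>\<rho> > 0\<close>
    by (rule tangent_ball_inter_convex_nonempty)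
  moreover have "ball c \<rho> \<inter> frontier V = {}"
    using frontier_outside_inner_ball[OF lip x(1) \<open>x \<in> V\<close> x(2)] normals
    by (fastforce simp: c_def \<rho>_def dist_commute)
  ultimately have "ball c \<rho> \<subseteq> V"
    using connected_Int_frontier[OF connected_ball, of c \<rho> V] by blast
  then have "cball c \<rho> \<subseteq> V"
    using closure_minimal[OF _ \<open>closed V\<close>] closure_ball[OF \<open>\<rho> > 0\<close>] by metis
  then show ?thesis
    by (simp add: c_def \<rho>_def)
qed

lemma normal_inequality_of_C11_convex_body:
  fixes C :: "'a::real_inner set" and N :: "'a \<Rightarrow> 'a"
  assumes V: "C11_convex_body V" and "C \<subseteq> frontier V" and normal: "\<forall>x\<in>C. outer_unit_normal V x (N x)"
  shows "\<exists>r>0. \<forall>x\<in>C. \<forall>y\<in>C. N y \<bullet> (y - x) \<ge> r / 2 * (norm (N y - N x))\<^sup>2"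
proof -
  obtain L where "0 < L" "normal_lipschitz V L"
    using V by (auto simp: C11_convex_body_def)
  define r where "r = 1 / (2 * L)"
  have "N y \<bullet> (y - x) \<ge> r / 2 * (norm (N y - N x))\<^sup>2" if "x \<in> C" "y \<in> C" for x y
  proof -
    have unit: "norm (N x) = 1" "norm (N y) = 1"
      using normal that by (auto simp: outer_unit_normal_def)
    \<comment> \<open>The inner tangent ball at x lies in V, so its point farthest in direction N y
      is cut off by the support hyperplane at y.\<close>
    have "cball (x - r *\<^sub>R N x) r \<subseteq> V"
      unfolding r_def using \<open>C \<subseteq> frontier V\<close> normal that
      by (intro cball_subset_C11_convex_body[OF V \<open>normal_lipschitz V L\<close> \<open>0 < L\<close>]) auto
    moreover have "x - r *\<^sub>R N x + r *\<^sub>R N y \<in> cball (x - r *\<^sub>R N x) r"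
      using unit \<open>0 < L\<close> by (simp add: r_def dist_norm)
    ultimately have "x - r *\<^sub>R N x + r *\<^sub>R N y \<in> V"
      by blast
    then have "N y \<bullet> (x - r *\<^sub>R N x + r *\<^sub>R N y - y) \<le> 0"
      using normal that by (auto simp: outer_unit_normal_def)
    then show ?thesis
      using unit by (simp add: norm_diff_sq_unit inner_diff_right inner_add_right inner_commute
          power2_norm_eq_inner[symmetric] algebra_simps)
  qed
  moreover have "0 < r"
    using \<open>0 < L\<close> by (simp add: r_def)
  ultimately show ?thesis
    by blast
qed

theorem theorem1p3:
  fixes C :: "'a::{real_inner,complete_space} set" and N :: "'a \<Rightarrow> 'a"
  assumes "\<forall>x\<in>C. norm (N x) = 1"
  shows "((\<exists>V. C11_convex_body V \<and> C \<subseteq> frontier V \<and> (\<forall>x\<in>C. outer_unit_normal V x (N x)))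
          \<longleftrightarrow> (\<exists>r>0. \<forall>x\<in>C. \<forall>y\<in>C. N y \<bullet> (y - x) \<ge> r / 2 * (norm (N y - N x))\<^sup>2))
       \<and> (\<forall>r>0. (\<forall>x\<in>C. \<forall>y\<in>C. N y \<bullet> (y - x) \<ge> r / 2 * (norm (N y - N x))\<^sup>2) \<longrightarrow>
            (\<exists>V. C11_convex_body V \<and> C \<subseteq> frontier V \<and> (\<forall>x\<in>C. outer_unit_normal V x (N x))
                 \<and> normal_lipschitz V (1 / r) \<and> (bounded C \<longrightarrow> bounded V)))"
proof (intro conjI iffI allI impI)
  assume "\<exists>V. C11_convex_body V \<and> C \<subseteq> frontier V \<and> (\<forall>x\<in>C. outer_unit_normal V x (N x))"
  then obtain V where "C11_convex_body V" "C \<subseteq> frontier V" "\<forall>x\<in>C. outer_unit_normal V x (N x)"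
    by blast
  then show "\<exists>r>0. \<forall>x\<in>C. \<forall>y\<in>C. N y \<bullet> (y - x) \<ge> r / 2 * (norm (N y - N x))\<^sup>2"
    by (rule normal_inequality_of_C11_convex_body)
next
  assume "\<exists>r>0. \<forall>x\<in>C. \<forall>y\<in>C. N y \<bullet> (y - x) \<ge> r / 2 * (norm (N y - N x))\<^sup>2"
  then obtain r where "0 < r" "\<forall>x\<in>C. \<forall>y\<in>C. N y \<bullet> (y - x) \<ge> r / 2 * (norm (N y - N x))\<^sup>2"
    by blast
  from exists_C11_convex_body_with_normals[OF assms this] obtain V
    where "C11_convex_body V" "C \<subseteq> frontier V" "\<forall>x\<in>C. outer_unit_normal V x (N x)"
    by blast
  then show "\<exists>V. C11_convex_body V \<and> C \<subseteq> frontier V \<and> (\<forall>x\<in>C. outer_unit_normal V x (N x))"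
    by blast
next
  fix r :: real
  assume "0 < r" "\<forall>x\<in>C. \<forall>y\<in>C. N y \<bullet> (y - x) \<ge> r / 2 * (norm (N y - N x))\<^sup>2"
  then show "\<exists>V. C11_convex_body V \<and> C \<subseteq> frontier V \<and> (\<forall>x\<in>C. outer_unit_normal V x (N x))
      \<and> normal_lipschitz V (1 / r) \<and> (bounded C \<longrightarrow> bounded V)"
    by (rule exists_C11_convex_body_with_normals[OF assms])
qed

end
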